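(* Let $q>r\geq 1$ be integers and $\alpha$ a real number. Suppose that for all positive integers $N$ we have $f_{q,r}(N)\geq N^{\alpha-\varepsilon(N)}$, for some function $\varepsilon$ with $\lim_{N\to\infty}\varepsilon(N)=0$. Then $f_{q,r}(N)\geq N^{\alpha}$ for all positive integers $N$.
   Context: For a $q$-edge-colored complete graph $K$ on vertex set $[N]$ with its natural order, $f_{q,r}(K)$ is the maximum number of vertices of a monotone path (vertices strictly increasing in traversal order) in $K$ whose edges use at most $r$ colors; $f_{q,r}(N)$ is the minimum of $f_{q,r}(K)$ over all such $q$-edge-colored $K$ on $N$ vertices. *)

theory Defs
  imports Complex_Main
begin

text \<open>A q-edge-colouring of the complete graph on [N] = {1..N}: the colour of the
  edge {i,j} with i < j is c i j, which must lie in {0..<q}. Values of c on other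
  arguments are irrelevant (paths only use pairs i < j).\<close>
definition is_coloring :: "nat \<Rightarrow> nat \<Rightarrow> (nat \<Rightarrow> nat \<Rightarrow> nat) \<Rightarrow> bool" where
  "is_coloring q N c \<longleftrightarrow> (\<forall>i j. 1 \<le> i \<longrightarrow> i < j \<longrightarrow> j \<le> N \<longrightarrow> c i j < q)"

definition path_colors :: "(nat \<Rightarrow> nat \<Rightarrow> nat) \<Rightarrow> nat list \<Rightarrow> nat set" where
  "path_colors c xs = set (map (\<lambda>(a, b). c a b) (zip xs (tl xs)))"

definition good_path :: "nat \<Rightarrow> nat \<Rightarrow> (nat \<Rightarrow> nat \<Rightarrow> nat) \<Rightarrow> nat list \<Rightarrow> bool" where
  "good_path r N c xs \<longleftrightarrow> sorted_wrt (<) xs \<and> set xs \<subseteq> {1..N} \<and> card (path_colors c xs) \<le> r"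

definition fK :: "nat \<Rightarrow> nat \<Rightarrow> (nat \<Rightarrow> nat \<Rightarrow> nat) \<Rightarrow> nat" where
  "fK r N c = Max {length xs | xs. good_path r N c xs}"

definition f :: "nat \<Rightarrow> nat \<Rightarrow> nat \<Rightarrow> nat" where
  "f q r N = Min {fK r N c | c. is_coloring q N c}"

end

theory Submission
  imports Defs
begin

text \<open>Blowing up an extremal colouring of [N] by an extremal colouring of [M] gives a colouring
  of [N*M] in which a monotone path with few colours visits few blocks and few vertices in each
  block, so f is submultiplicative: f(N*M) \<le> f(N) f(M). Hence f(N)^k \<ge> f(N^k) \<ge>
  N^(k(\<alpha> - \<epsilon>(N^k))), i.e. f(N) \<ge> N^(\<alpha> - \<epsilon>(N^k)) for every k, and letting k \<rightarrow> \<infinity> the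
  error term disappears.\<close>

lemma path_colors_Nil [simp]: "path_colors c [] = {}"
  and path_colors_singleton [simp]: "path_colors c [x] = {}"
  and path_colors_Cons_Cons [simp]:
    "path_colors c (x # y # zs) = insert (c x y) (path_colors c (y # zs))"
  by (auto simp: path_colors_def)

lemma finite_path_colors [simp]: "finite (path_colors c xs)"
  by (simp add: path_colors_def)

definition mono_path :: "nat \<Rightarrow> (nat \<Rightarrow> nat \<Rightarrow> nat) \<Rightarrow> nat set \<Rightarrow> nat list \<Rightarrow> bool" where
  "mono_path n c P xs \<longleftrightarrow> sorted_wrt (<) xs \<and> set xs \<subseteq> {1..n} \<and> path_colors c xs \<subseteq> P"

lemma mono_path_Nil [simp]: "mono_path n c P []"
  by (simp add: mono_path_def)

lemma good_path_iff_mono_path: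
  "good_path r n c xs \<longleftrightarrow> mono_path n c (path_colors c xs) xs \<and> card (path_colors c xs) \<le> r"
  by (simp add: good_path_def mono_path_def)

lemma length_le_if_mono_path:
  assumes "mono_path n c P xs"
  shows "length xs \<le> n"
proof -
  have "distinct xs"
    using assms strict_sorted_iff unfolding mono_path_def by blast
  then have "length xs = card (set xs)"
    by (simp add: distinct_card)
  also have "\<dots> \<le> card {1..n}"
    using assms unfolding mono_path_def by (intro card_mono) auto
  finally show ?thesis by simp
qed

lemma finite_good_path_lengths: "finite {length xs | xs. good_path r n c xs}"
  by (rule finite_subset[of _ "{..n}"]) (auto simp: good_path_iff_mono_path dest: length_le_if_mono_path)

lemma good_path_lengths_nonempty: "{length xs | xs. good_path r n c xs} \<noteq> {}"
proof -
  have "good_path r n c []" by (simp add: good_path_def)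
  then show ?thesis by blast
qed

lemma length_le_fK:
  assumes "mono_path n c P xs" and "finite P" and "card P \<le> r"
  shows "length xs \<le> fK r n c"
proof -
  have "card (path_colors c xs) \<le> card P"
    using assms(1,2) unfolding mono_path_def by (intro card_mono) auto
  then have "good_path r n c xs"
    using assms unfolding good_path_def mono_path_def by simp
  then show ?thesis
    unfolding fK_def by (intro Max_ge[OF finite_good_path_lengths]) blast
qed

lemma fK_le:
  assumes "\<And>xs. good_path r n c xs \<Longrightarrow> length xs \<le> m"
  shows "fK r n c \<le> m"
proof -
  obtain xs where "good_path r n c xs" and "fK r n c = length xs"
    using Max_in[OF finite_good_path_lengths good_path_lengths_nonempty, of r n c]
    unfolding fK_def by auto
  with assms show ?thesis by simp
qed

lemma finite_fK_values: "finite {fK r n c | c. is_coloring q n c}"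
proof (rule finite_subset[of _ "{..n}"])
  have "fK r n c \<le> n" for c
    by (rule fK_le) (auto simp: good_path_iff_mono_path dest: length_le_if_mono_path)
  then show "{fK r n c | c. is_coloring q n c} \<subseteq> {..n}" by auto
qed simp

lemma f_le_fK: "is_coloring q n c \<Longrightarrow> f q r n \<le> fK r n c"
  unfolding f_def by (rule Min_le[OF finite_fK_values]) blast

lemma f_attained:
  assumes "q > 0"
  obtains c where "is_coloring q n c" and "f q r n = fK r n c"
proof -
  have "{fK r n c | c. is_coloring q n c} \<noteq> {}"
    using assms by (auto simp: is_coloring_def)
  from Min_in[OF finite_fK_values this] that show ?thesis
    unfolding f_def by auto
qed

text \<open>Vertex v of [N*M] is vertex offset M v of the block block M v, which consists of the
  M consecutive vertices (block M v - 1) * M + 1, ..., block M v * M.\<close>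

definition block :: "nat \<Rightarrow> nat \<Rightarrow> nat" where
  "block M v = (v - 1) div M + 1"

definition offset :: "nat \<Rightarrow> nat \<Rightarrow> nat" where
  "offset M v = (v - 1) mod M + 1"

definition product_coloring ::
    "nat \<Rightarrow> (nat \<Rightarrow> nat \<Rightarrow> nat) \<Rightarrow> (nat \<Rightarrow> nat \<Rightarrow> nat) \<Rightarrow> nat \<Rightarrow> nat \<Rightarrow> nat" where
  "product_coloring M c1 c2 v w =
    (if block M v < block M w then c1 (block M v) (block M w) else c2 (offset M v) (offset M w))"

lemma block_in_range:
  assumes "M > 0" and "1 \<le> v" and "v \<le> N * M"
  shows "block M v \<in> {1..N}"
proof -
  have "v - 1 < N * M" using assms by simp
  then have "(v - 1) div M < N" by (simp add: less_mult_imp_div_less)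
  then show ?thesis unfolding block_def by simp
qed

lemma offset_in_range: "M > 0 \<Longrightarrow> offset M v \<in> {1..M}"
  unfolding offset_def by (simp add: Suc_leI)

lemma block_mono: "v \<le> w \<Longrightarrow> block M v \<le> block M w"
  unfolding block_def by (simp add: div_le_mono)

lemma offset_less_if_same_block:
  assumes "1 \<le> v" and "v < w" and "block M v = block M w"
  shows "offset M v < offset M w"
proof -
  have same_div: "(v - 1) div M = (w - 1) div M"
    using assms(3) unfolding block_def by simp
  have "(v - 1) div M * M + (v - 1) mod M < (w - 1) div M * M + (w - 1) mod M"
    using assms(1,2) by (simp only: div_mult_mod_eq)
  then have "(v - 1) mod M < (w - 1) mod M"
    unfolding same_div by (rule add_less_imp_less_left)
  then show ?thesis unfolding offset_def by simp
qed

lemma is_coloring_product_coloring: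
  assumes "M > 0" and "is_coloring q N c1" and "is_coloring q M c2"
  shows "is_coloring q (N * M) (product_coloring M c1 c2)"
  unfolding is_coloring_def
proof (intro allI impI)
  fix v w assume vw: "1 \<le> v" "v < w" "w \<le> N * M"
  show "product_coloring M c1 c2 v w < q"
  proof (cases "block M v < block M w")
    case True
    moreover have "block M v \<in> {1..N}" "block M w \<in> {1..N}"
      using block_in_range[OF assms(1), of v N] block_in_range[OF assms(1), of w N] vw by auto
    ultimately show ?thesis
      using assms(2) unfolding product_coloring_def is_coloring_def by auto
  next
    case False
    then have "block M v = block M w"
      using block_mono[of v w M] vw(2) by simp
    then have "offset M v < offset M w"
      using offset_less_if_same_block vw(1,2) by blast
    then show ?thesis
      using False assms(3) offset_in_range[OF assms(1)]
      unfolding product_coloring_def is_coloring_def by auto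
  qed
qed

text \<open>Induction invariant: ys lists the blocks visited by xs and zs the offsets of the vertices
  of xs in its first block; every later block contributes at most m vertices.\<close>

lemma mono_path_product_coloring_blocks:
  assumes M: "M > 0"
    and bound: "\<And>zs. mono_path M c2 P zs \<Longrightarrow> length zs \<le> m"
  shows "mono_path (N * M) (product_coloring M c1 c2) P xs \<Longrightarrow> xs \<noteq> [] \<Longrightarrow>
    \<exists>ys zs. mono_path N c1 P ys \<and> ys \<noteq> [] \<and> hd ys = block M (hd xs)
      \<and> mono_path M c2 P zs \<and> zs \<noteq> [] \<and> hd zs = offset M (hd xs)
      \<and> length xs + m \<le> m * length ys + length zs"
proof (induction xs)
  case Nil
  then show ?case by simp
next
  case (Cons x xs)
  have x: "1 \<le> x" "x \<le> N * M"
    using Cons.prems(1) unfolding mono_path_def by auto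
  show ?case
  proof (cases xs)
    case Nil
    with x show ?thesis
      using block_in_range[OF M x] offset_in_range[OF M, of x] bound[of "[]"]
      by (intro exI[of _ "[block M x]"] exI[of _ "[offset M x]"]) (auto simp: mono_path_def)
  next
    case (Cons x' xs')
    have "x < x'" and tail: "mono_path (N * M) (product_coloring M c1 c2) P xs"
      and colour: "product_coloring M c1 c2 x x' \<in> P"
      using Cons.prems(1) \<open>xs = x' # xs'\<close> by (auto simp: mono_path_def)
    obtain ys zs where
      ys: "mono_path N c1 P ys" "ys \<noteq> []" "hd ys = block M x'" and
      zs: "mono_path M c2 P zs" "zs \<noteq> []" "hd zs = offset M x'" and
      len: "length xs + m \<le> m * length ys + length zs"
      using Cons.IH[OF tail] \<open>xs = x' # xs'\<close> by auto
    show ?thesis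
    proof (cases "block M x = block M x'")
      case True
      have "offset M x < hd zs"
        using offset_less_if_same_block[OF x(1) \<open>x < x'\<close> True] zs(3) by simp
      moreover have "c2 (offset M x) (hd zs) \<in> P"
        using colour True zs(3) unfolding product_coloring_def by simp
      ultimately have "mono_path M c2 P (offset M x # zs)"
        using zs(1,2) offset_in_range[OF M, of x]
        by (cases zs) (auto simp: mono_path_def sorted_wrt2)
      with ys zs len True show ?thesis
        by (intro exI[of _ ys] exI[of _ "offset M x # zs"]) auto
    next
      case False
      then have "block M x < hd ys"
        using block_mono[of x x' M] \<open>x < x'\<close> ys(3) by simp
      moreover have "c1 (block M x) (hd ys) \<in> P"
        using colour \<open>block M x < hd ys\<close> ys(3) unfolding product_coloring_def by simp
      ultimately have "mono_path N c1 P (block M x # ys)"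
        using ys(1,2) block_in_range[OF M x]
        by (cases ys) (auto simp: mono_path_def sorted_wrt2)
      moreover have "length zs \<le> m"
        using bound[OF zs(1)] .
      ultimately show ?thesis
        using len offset_in_range[OF M, of x] bound[of "[]"]
        by (intro exI[of _ "block M x # ys"] exI[of _ "[offset M x]"])
          (auto simp: mono_path_def)
    qed
  qed
qed

lemma mono_path_product_coloring:
  assumes "M > 0"
    and "\<And>zs. mono_path M c2 P zs \<Longrightarrow> length zs \<le> m"
    and "mono_path (N * M) (product_coloring M c1 c2) P xs"
  obtains ys where "mono_path N c1 P ys" and "length xs \<le> m * length ys"
proof (cases "xs = []")
  case True
  with that[of "[]"] show ?thesis by simp
next
  case False
  then obtain ys zs where "mono_path N c1 P ys" "mono_path M c2 P zs"
    "length xs + m \<le> m * length ys + length zs"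
    using mono_path_product_coloring_blocks[OF assms] by blast
  with assms(2) that show ?thesis by fastforce
qed

lemma f_mult_le:
  assumes "q > 0" and "M > 0"
  shows "f q r (N * M) \<le> f q r N * f q r M"
proof -
  obtain c1 where c1: "is_coloring q N c1" "f q r N = fK r N c1"
    using f_attained[OF assms(1)] .
  obtain c2 where c2: "is_coloring q M c2" "f q r M = fK r M c2"
    using f_attained[OF assms(1)] .
  let ?c = "product_coloring M c1 c2"
  have "fK r (N * M) ?c \<le> fK r N c1 * fK r M c2"
  proof (rule fK_le)
    fix xs assume "good_path r (N * M) ?c xs"
    then have path: "mono_path (N * M) ?c (path_colors ?c xs) xs"
      and few: "card (path_colors ?c xs) \<le> r"
      by (simp_all add: good_path_iff_mono_path)
    obtain ys where "mono_path N c1 (path_colors ?c xs) ys" "length xs \<le> fK r M c2 * length ys"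
      using mono_path_product_coloring[OF assms(2) length_le_fK[OF _ _ few] path] by auto
    moreover have "length ys \<le> fK r N c1"
      using length_le_fK[OF _ _ few] calculation(1) by simp
    ultimately show "length xs \<le> fK r N c1 * fK r M c2"
      by (metis le_trans mult.commute mult_le_mono2)
  qed
  moreover have "f q r (N * M) \<le> fK r (N * M) ?c"
    by (intro f_le_fK is_coloring_product_coloring assms(2) c1(1) c2(1))
  ultimately show ?thesis
    using c1(2) c2(2) by simp
qed

lemma powr_le_if_submultiplicative:
  fixes g :: "nat \<Rightarrow> real" and \<epsilon> :: "nat \<Rightarrow> real"
  assumes nonneg: "\<And>n. 0 \<le> g n"
    and submult: "\<And>m n. 0 < m \<Longrightarrow> 0 < n \<Longrightarrow> g (m * n) \<le> g m * g n"
    and "\<epsilon> \<longlonglongrightarrow> 0"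
    and lower: "\<And>n. 0 < n \<Longrightarrow> real n powr (\<alpha> - \<epsilon> n) \<le> g n"
    and "0 < N"
  shows "real N powr \<alpha> \<le> g N"
proof (cases "N = 1")
  case True
  then show ?thesis using lower[of 1] by simp
next
  case False
  with \<open>0 < N\<close> have "2 \<le> N" by simp
  have power_le: "g (N ^ Suc k) \<le> g N ^ Suc k" for k
  proof (induction k)
    case (Suc k)
    have "g (N ^ Suc (Suc k)) \<le> g N * g (N ^ Suc k)"
      using submult \<open>0 < N\<close> by simp
    also have "\<dots> \<le> g N ^ Suc (Suc k)"
      using Suc nonneg by (simp add: mult_left_mono)
    finally show ?case .
  qed simp
  have approx: "real N powr (\<alpha> - \<epsilon> (N ^ Suc k)) \<le> g N" for k
  proof -
    have "real (N ^ Suc k) = real N powr real (Suc k)"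
      using powr_realpow[of "real N" "Suc k"] \<open>0 < N\<close> by simp
    then have "(real N powr (\<alpha> - \<epsilon> (N ^ Suc k))) ^ Suc k = real (N ^ Suc k) powr (\<alpha> - \<epsilon> (N ^ Suc k))"
      using \<open>0 < N\<close> by (simp only: powr_power powr_powr)
    also have "\<dots> \<le> g N ^ Suc k"
      using lower[of "N ^ Suc k"] power_le[of k] \<open>0 < N\<close> by simp
    finally show ?thesis
      by (rule power_le_imp_le_base) (rule nonneg)
  qed
  have "strict_mono (\<lambda>k. N ^ Suc k)"
    using \<open>2 \<le> N\<close> by (intro strict_monoI power_strict_increasing) auto
  then have "(\<lambda>k. \<epsilon> (N ^ Suc k)) \<longlonglongrightarrow> 0"
    using LIMSEQ_subseq_LIMSEQ[OF \<open>\<epsilon> \<longlonglongrightarrow> 0\<close>] by (simp add: o_def)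
  then have "(\<lambda>k. real N powr (\<alpha> - \<epsilon> (N ^ Suc k))) \<longlonglongrightarrow> real N powr (\<alpha> - 0)"
    using \<open>0 < N\<close> by (intro tendsto_powr tendsto_diff tendsto_const) auto
  then show ?thesis
    using approx by (intro LIMSEQ_le_const2[of _ "real N powr \<alpha>"]) auto
qed

theorem proposition3p6:
  fixes q r :: nat and \<alpha> :: real and \<epsilon> :: "nat \<Rightarrow> real"
  assumes "q > r" and "r \<ge> 1"
    and "\<epsilon> \<longlonglongrightarrow> 0"
    and "\<forall>N::nat. N > 0 \<longrightarrow> real (f q r N) \<ge> real N powr (\<alpha> - \<epsilon> N)"
  shows "\<forall>N::nat. N > 0 \<longrightarrow> real (f q r N) \<ge> real N powr \<alpha>"
proof (intro allI impI)
  fix N :: nat assume "N > 0"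
  have "q > 0" using assms(1) by simp
  have "real (f q r (m * n)) \<le> real (f q r m) * real (f q r n)" if "0 < n" for m n
    using f_mult_le[OF \<open>q > 0\<close> that, of r m] by (simp flip: of_nat_mult)
  then show "real N powr \<alpha> \<le> real (f q r N)"
    using powr_le_if_submultiplicative[of "\<lambda>n. real (f q r n)" \<epsilon> \<alpha> N] assms(3,4) \<open>N > 0\<close>
    by simp
qed

end
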